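(* Let $K$ be a field with a non-trivial non-Archimedean valuation $|\cdot|$, let $X$ be a complete non-Archimedean normed space over $K$, and let $G$ be an additive (abelian) group. Fix $k\in\mathbb N$, and assume $|2k^4|\neq0$. For $f:G\to X$ define $$\Delta f(x,y)=f(kx+y)+f(kx-y)-k^2[f(x+y)+f(x-y)]-2k^2(k^2-1)f(x)+2(k^2-1)f(y)\qquad(x,y\in G).$$ Let $\psi:G\times G\to[0,\infty)$ be a function such that $$\lim_{n\to\infty}\frac{\psi(k^nx,k^ny)}{|k|^{4n}}=0\quad\text{for all }x,y\in G,$$ and such that for each $x\in G$ the limit $$\tilde\psi(x):=\lim_{n\to\infty}\max\Big\{\frac{\psi(k^jx,0)}{|k|^{4j}}:\ 0\le j<n\Big\}$$ exists. Suppose $f:G\to X$ satisfies $f(0)=0$ and $\|\Delta f(x,y)\|\le\psi(x,y)$ for all $x,y\in G$. Then there exists a quartic mapping $Q:G\to X$ (i.e. $\Delta Q(x,y)=0$ for all $x,y\in G$) such that $$\|Q(x)-f(x)\|\le\frac{1}{|2k^4|}\tilde\psi(x)\quad\text{for all }x\in G.$$ Moreover, if $$\lim_{i\to\infty}\lim_{n\to\infty}\max\Big\{\frac{\psi(k^jx,0)}{|k|^{4j}}:\ i\le j<n+i\Big\}=0\quad\text{for all }x\in G,$$ then $Q$ is the unique quartic mapping satisfying this inequality.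
   Context: A non-Archimedean field is a field $K$ with $|\cdot|:K\to[0,\infty)$ such that $|r|=0$ iff $r=0$, $|rs|=|r||s|$, $|r+s|\le\max\{|r|,|s|\}$. A non-Archimedean norm on a $K$-vector space $X$ satisfies $\|x\|=0$ iff $x=0$, $\|rx\|=|r|\|x\|$, $\|x+y\|\le\max\{\|x\|,\|y\|\}$; complete means every Cauchy sequence converges. Integers are regarded as elements of $K$ and $|k|$ is the valuation of $k$ in $K$. *)

theory Defs
  imports Complex_Main
begin

definition nonarch_valuation :: "('k::field \<Rightarrow> real) \<Rightarrow> bool" where
  "nonarch_valuation v \<longleftrightarrow>
     (\<forall>r. v r \<ge> 0) \<and> (\<forall>r. v r = 0 \<longleftrightarrow> r = 0) \<and>
     (\<forall>r s. v (r * s) = v r * v s) \<and> (\<forall>r s. v (r + s) \<le> max (v r) (v s))"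

definition nontrivial_valuation :: "('k::field \<Rightarrow> real) \<Rightarrow> bool" where
  "nontrivial_valuation v \<longleftrightarrow> (\<exists>r. v r \<noteq> 0 \<and> v r \<noteq> 1)"

definition complete_nonarch_normed_space ::
  "('k::field \<Rightarrow> real) \<Rightarrow> ('k \<Rightarrow> 'x::ab_group_add \<Rightarrow> 'x) \<Rightarrow> ('x \<Rightarrow> real) \<Rightarrow> bool" where
  "complete_nonarch_normed_space v smul nrm \<longleftrightarrow>
     (\<forall>a x y. smul a (x + y) = smul a x + smul a y) \<and>
     (\<forall>a b x. smul (a + b) x = smul a x + smul b x) \<and>
     (\<forall>a b x. smul (a * b) x = smul a (smul b x)) \<and>
     (\<forall>x. smul 1 x = x) \<and>
     (\<forall>x. nrm x \<ge> 0) \<and> (\<forall>x. nrm x = 0 \<longleftrightarrow> x = 0) \<and>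
     (\<forall>r x. nrm (smul r x) = v r * nrm x) \<and>
     (\<forall>x y. nrm (x + y) \<le> max (nrm x) (nrm y)) \<and>
     (\<forall>s :: nat \<Rightarrow> 'x. (\<forall>e>0. \<exists>N. \<forall>m\<ge>N. \<forall>n\<ge>N. nrm (s m - s n) < e) \<longrightarrow>
        (\<exists>l. (\<lambda>n. nrm (s n - l)) \<longlonglongrightarrow> 0))"

definition gmul :: "nat \<Rightarrow> 'g::ab_group_add \<Rightarrow> 'g" where
  "gmul n x = (\<Sum>i<n. x)"

definition quartic_delta ::
  "('k::field \<Rightarrow> 'x::ab_group_add \<Rightarrow> 'x) \<Rightarrow> nat \<Rightarrow> ('g::ab_group_add \<Rightarrow> 'x) \<Rightarrow> 'g \<Rightarrow> 'g \<Rightarrow> 'x" where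
  "quartic_delta smul k f x y =
     f (gmul k x + y) + f (gmul k x - y)
     - smul ((of_nat k)^2) (f (x + y) + f (x - y))
     - smul (2 * (of_nat k)^2 * ((of_nat k)^2 - 1)) (f x)
     + smul (2 * ((of_nat k)^2 - 1)) (f y)"

definition quartic_map ::
  "('k::field \<Rightarrow> 'x::ab_group_add \<Rightarrow> 'x) \<Rightarrow> nat \<Rightarrow> ('g::ab_group_add \<Rightarrow> 'x) \<Rightarrow> bool" where
  "quartic_map smul k Q \<longleftrightarrow> (\<forall>x y. quartic_delta smul k Q x y = 0)"

definition psi_max ::
  "('k::field \<Rightarrow> real) \<Rightarrow> nat \<Rightarrow> ('g::ab_group_add \<Rightarrow> 'g \<Rightarrow> real) \<Rightarrow> 'g \<Rightarrow> nat \<Rightarrow> nat \<Rightarrow> real" where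
  "psi_max v k psi x i n =
     Max ((\<lambda>j. psi (gmul (k ^ j) x) 0 / (v (of_nat k)) ^ (4 * j)) ` {i..<n + i})"

definition psi_tilde ::
  "('k::field \<Rightarrow> real) \<Rightarrow> nat \<Rightarrow> ('g::ab_group_add \<Rightarrow> 'g \<Rightarrow> real) \<Rightarrow> 'g \<Rightarrow> real" where
  "psi_tilde v k psi x = lim (\<lambda>n. psi_max v k psi x 0 n)"

end

theory Submission
  imports Defs
begin

(* Hyers' direct method. Putting y = 0 in the functional inequality gives
   ||2 (f (k x) - k^4 f x)|| <= psi(x,0), so consecutive terms of a_n x = k^(-4n) f (k^n x)
   differ by at most psi(k^n x, 0) / (|2 k^4| |k|^(4n)). These differences tend to 0, which in a
   complete ultrametric space already makes a_n x converge; the ultrametric inequality bounds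
   a_n x - f x by the maximum, not the sum, of the first n differences. The limit Q is quartic
   because Delta a_n (x,y) = k^(-4n) Delta f (k^n x, k^n y). For uniqueness, every quartic map
   satisfies Q (k^n x) = k^(4n) Q x, so two solutions differ at x by at most the tail maximum
   starting at n, which tends to 0. *)

lemma tendsto_0_dominated:
  fixes a b :: "nat \<Rightarrow> real"
  assumes "\<And>n. 0 \<le> a n" "\<And>n. a n \<le> b n" "b \<longlonglongrightarrow> 0"
  shows "a \<longlonglongrightarrow> 0"
proof (rule tendsto_sandwich[of "\<lambda>_. 0" a sequentially b])
qed (use assms in auto)

lemma gmul_0 [simp]: "gmul 0 x = 0"
  by (simp add: gmul_def)

lemma gmul_Suc: "gmul (Suc n) x = x + gmul n x"
  by (simp add: gmul_def)

lemma gmul_1 [simp]: "gmul (Suc 0) x = x"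
  by (simp add: gmul_Suc)

lemma gmul_zero_right [simp]: "gmul n (0::'g::ab_group_add) = 0"
  by (induct n) (simp_all add: gmul_Suc)

lemma gmul_add_right: "gmul n (x + y) = gmul n x + gmul n (y::'g::ab_group_add)"
  by (induct n) (simp_all add: gmul_Suc algebra_simps)

lemma gmul_minus_right: "gmul n (- x) = - gmul n (x::'g::ab_group_add)"
  by (induct n) (simp_all add: gmul_Suc algebra_simps)

lemma gmul_diff_right: "gmul n (x - y) = gmul n x - gmul n (y::'g::ab_group_add)"
  using gmul_add_right[of n x "- y"] by (simp add: gmul_minus_right)

lemma gmul_add_left: "gmul (m + n) x = gmul m x + gmul n (x::'g::ab_group_add)"
  by (induct m) (simp_all add: gmul_Suc algebra_simps)

lemma gmul_mult: "gmul (m * n) x = gmul m (gmul n (x::'g::ab_group_add))"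
  by (induct m) (simp_all add: gmul_Suc gmul_add_left)

lemma gmul_commute: "gmul m (gmul n x) = gmul n (gmul m (x::'g::ab_group_add))"
  by (metis gmul_mult mult.commute)

locale nonarch_space =
  fixes v :: "'k::field \<Rightarrow> real" and smul :: "'k \<Rightarrow> 'x::ab_group_add \<Rightarrow> 'x" and nrm :: "'x \<Rightarrow> real"
  assumes valuation: "nonarch_valuation v"
    and space: "complete_nonarch_normed_space v smul nrm"
begin

lemma v_nonneg: "0 \<le> v r"
  using valuation by (simp add: nonarch_valuation_def)

lemma v_eq_0_iff: "v r = 0 \<longleftrightarrow> r = 0"
  using valuation by (simp add: nonarch_valuation_def)

lemma v_pos_iff: "0 < v r \<longleftrightarrow> r \<noteq> 0"
  using v_nonneg[of r] v_eq_0_iff[of r] by linarith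

lemma v_mult: "v (r * s) = v r * v s"
  using valuation by (simp add: nonarch_valuation_def)

lemma v_one [simp]: "v 1 = 1"
  using v_mult[of 1 1] v_eq_0_iff[of 1] by simp

lemma v_inverse: "v (inverse r) = inverse (v r)"
proof (cases "r = 0")
  case False
  then have "v r * v (inverse r) = 1"
    using v_mult[of r "inverse r"] by simp
  then show ?thesis
    by (metis inverse_unique)
qed (use v_eq_0_iff[of 0] in simp)

lemma v_power: "v (r ^ n) = v r ^ n"
  by (induct n) (simp_all add: v_mult)

lemma v_minus: "v (- r) = v r"
proof -
  have "v (-1) * v (-1) = 1"
    using v_mult[of "-1" "-1"] by simp
  then have "(v (-1) - 1) * (v (-1) + 1) = 0"
    by (simp add: algebra_simps)
  then have "v (-1) = 1"
    using v_nonneg[of "-1"] by simp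
  then show ?thesis
    using v_mult[of "-1" r] by simp
qed

lemma smul_add_right: "smul a (x + y) = smul a x + smul a y"
  using space by (simp add: complete_nonarch_normed_space_def)

lemma smul_add_left: "smul (a + b) x = smul a x + smul b x"
  using space by (simp add: complete_nonarch_normed_space_def)

lemma smul_mult: "smul (a * b) x = smul a (smul b x)"
  using space by (simp add: complete_nonarch_normed_space_def)

lemma smul_one [simp]: "smul 1 x = x"
  using space by (simp add: complete_nonarch_normed_space_def)

lemma nrm_nonneg: "0 \<le> nrm x"
  using space by (simp add: complete_nonarch_normed_space_def)

lemma nrm_eq_0_iff: "nrm x = 0 \<longleftrightarrow> x = 0"
  using space by (simp add: complete_nonarch_normed_space_def)

lemma nrm_smul: "nrm (smul r x) = v r * nrm x"
  using space by (simp add: complete_nonarch_normed_space_def)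

lemma nrm_ultrametric: "nrm (x + y) \<le> max (nrm x) (nrm y)"
  using space by (simp add: complete_nonarch_normed_space_def)

lemma nrm_complete:
  "(\<And>e. 0 < e \<Longrightarrow> \<exists>N. \<forall>m\<ge>N. \<forall>n\<ge>N. nrm (s m - s n) < e) \<Longrightarrow>
    \<exists>l. (\<lambda>n. nrm (s n - l)) \<longlonglongrightarrow> 0"
  using space unfolding complete_nonarch_normed_space_def by blast

lemma nrm_zero [simp]: "nrm 0 = 0"
  by (simp add: nrm_eq_0_iff)

lemma nrm_le_0_iff: "nrm x \<le> 0 \<longleftrightarrow> x = 0"
  using nrm_nonneg[of x] nrm_eq_0_iff[of x] by auto

lemma smul_zero_right [simp]: "smul a 0 = 0"
  using smul_add_right[of a 0 0] by simp

lemma smul_zero_left [simp]: "smul 0 x = 0"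
  using smul_add_left[of 0 0 x] by simp

lemma smul_minus_right: "smul a (- x) = - smul a x"
  using smul_add_right[of a x "- x"] by (simp add: eq_neg_iff_add_eq_0 add.commute)

lemma smul_diff_right: "smul a (x - y) = smul a x - smul a y"
  using smul_add_right[of a x "- y"] by (simp add: smul_minus_right)

lemma smul_minus_left: "smul (- a) x = - smul a x"
  using smul_add_left[of a "- a" x] by (simp add: eq_neg_iff_add_eq_0 add.commute)

lemma smul_diff_left: "smul (a - b) x = smul a x - smul b x"
  using smul_add_left[of a "- b" x] by (simp add: smul_minus_left)

lemma smul_commute: "smul a (smul b x) = smul b (smul a x)"
  by (metis smul_mult mult.commute)

lemma smul_inverse_cancel: "a \<noteq> 0 \<Longrightarrow> smul (inverse a) (smul a x) = x"
  by (metis smul_mult smul_one left_inverse)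

lemma smul_eq_0_iff: "a \<noteq> 0 \<Longrightarrow> smul a x = 0 \<longleftrightarrow> x = 0"
  by (metis smul_inverse_cancel smul_zero_right)

lemma nrm_minus: "nrm (- x) = nrm x"
  using nrm_smul[of "-1" x] smul_minus_left[of 1 x] v_minus[of 1] by simp

lemma nrm_commute: "nrm (x - y) = nrm (y - x)"
  using nrm_minus[of "x - y"] by simp

lemma nrm_add_le: "nrm (x + y) \<le> nrm x + nrm y"
  using nrm_ultrametric[of x y] nrm_nonneg[of x] nrm_nonneg[of y] by linarith

lemma nrm_diff_ultrametric: "nrm (x - z) \<le> max (nrm (x - y)) (nrm (y - z))"
  using nrm_ultrametric[of "x - y" "y - z"] by simp

definition converges_to :: "(nat \<Rightarrow> 'x) \<Rightarrow> 'x \<Rightarrow> bool" where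
  "converges_to s l \<longleftrightarrow> (\<lambda>n. nrm (s n - l)) \<longlonglongrightarrow> 0"

lemma converges_to_add:
  assumes "converges_to s l" "converges_to t m"
  shows "converges_to (\<lambda>n. s n + t n) (l + m)"
  unfolding converges_to_def
proof (rule tendsto_0_dominated[OF nrm_nonneg])
  show "nrm (s n + t n - (l + m)) \<le> nrm (s n - l) + nrm (t n - m)" for n
    using nrm_add_le[of "s n - l" "t n - m"] by (simp add: algebra_simps)
  show "(\<lambda>n. nrm (s n - l) + nrm (t n - m)) \<longlonglongrightarrow> 0"
    using tendsto_add[OF assms[unfolded converges_to_def]] by simp
qed

lemma converges_to_smul: "converges_to s l \<Longrightarrow> converges_to (\<lambda>n. smul c (s n)) (smul c l)"
  unfolding converges_to_def smul_diff_right[symmetric] nrm_smul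
  by (rule tendsto_mult_right_zero)

lemma converges_to_minus: "converges_to s l \<Longrightarrow> converges_to (\<lambda>n. - s n) (- l)"
  unfolding converges_to_def using nrm_minus[of "s _ - l"] by simp

lemma converges_to_diff:
  "converges_to s l \<Longrightarrow> converges_to t m \<Longrightarrow> converges_to (\<lambda>n. s n - t n) (l - m)"
  using converges_to_add[of s l "\<lambda>n. - t n" "- m"] converges_to_minus[of t m] by simp

lemma nrm_limit_le:
  assumes "converges_to s l" "g \<longlonglongrightarrow> G" "\<And>n. N \<le> n \<Longrightarrow> nrm (s n - b) \<le> g n"
  shows "nrm (l - b) \<le> G"
proof -
  have "(\<lambda>n. nrm (s n - l) + g n) \<longlonglongrightarrow> 0 + G"
    using assms(1,2) unfolding converges_to_def by (rule tendsto_add)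
  moreover have "nrm (l - b) \<le> nrm (s n - l) + g n" if "N \<le> n" for n
    using nrm_diff_ultrametric[of l b "s n"] assms(3)[OF that] nrm_commute[of l "s n"]
      nrm_nonneg[of "s n - l"] nrm_nonneg[of "s n - b"] by simp
  ultimately show ?thesis
    by (intro LIMSEQ_le_const) auto
qed

lemma ultrametric_telescope:
  assumes "0 \<le> M" "\<And>j. n \<le> j \<Longrightarrow> j < m \<Longrightarrow> nrm (s (Suc j) - s j) \<le> M" "n \<le> m"
  shows "nrm (s m - s n) \<le> M"
  using assms(2,3)
proof (induction m)
  case (Suc m)
  show ?case
  proof (cases "n = Suc m")
    case False
    then have "n \<le> m"
      using Suc.prems by simp
    then have "max (nrm (s (Suc m) - s m)) (nrm (s m - s n)) \<le> M"
      using Suc by auto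
    then show ?thesis
      using nrm_diff_ultrametric[of "s (Suc m)" "s n" "s m"] by linarith
  qed (simp add: assms(1))
qed (simp add: assms(1))

(* By ultrametric_telescope, nrm (s m - s n) is at most the largest step between n and m. *)
lemma converges_if_steps_tendsto_0:
  assumes "(\<lambda>j. nrm (s (Suc j) - s j)) \<longlonglongrightarrow> 0"
  shows "\<exists>l. converges_to s l"
  unfolding converges_to_def
proof (rule nrm_complete)
  fix e :: real
  assume "0 < e"
  then obtain N where N: "\<And>j. N \<le> j \<Longrightarrow> nrm (s (Suc j) - s j) < e"
    using LIMSEQ_D[OF assms] nrm_nonneg by fastforce
  have *: "nrm (s m - s n) < e" if "N \<le> n" "n \<le> m" for m n
  proof (cases "n = m")
    case False
    have "nrm (s m - s n) \<le> Max ((\<lambda>j. nrm (s (Suc j) - s j)) ` {n..<m})"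
      by (rule ultrametric_telescope) (use False that in \<open>auto simp: Max_ge_iff nrm_nonneg\<close>)
    also have "\<dots> < e"
      using False that N by (subst Max_less_iff) auto
    finally show ?thesis .
  qed (simp add: \<open>0 < e\<close>)
  show "\<exists>N. \<forall>m\<ge>N. \<forall>n\<ge>N. nrm (s m - s n) < e"
  proof (intro exI allI impI)
    fix m n
    assume "N \<le> m" "N \<le> n"
    then show "nrm (s m - s n) < e"
      using *[of n m] *[of m n] nrm_commute[of "s m" "s n"] by (cases "n \<le> m") auto
  qed
qed

lemma quartic_delta_at_0:
  "quartic_delta smul k g x 0 =
     smul 2 (g (gmul k x) - smul (of_nat k ^ 4) (g x)) + smul (2 * (of_nat k ^ 2 - 1)) (g 0)"
proof -
  define c :: 'k where "c = of_nat k"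
  have "smul (2 * c ^ 4) (g x) = smul (c ^ 2) (g x + g x) + smul (2 * c ^ 2 * (c ^ 2 - 1)) (g x)"
    unfolding smul_add_right smul_add_left[symmetric]
    by (simp add: algebra_simps power2_eq_square power4_eq_xxxx)
  moreover have "smul 2 y = y + y" for y
    using smul_add_left[of 1 1 y] by simp
  ultimately show ?thesis
    unfolding quartic_delta_def c_def[symmetric]
    by (simp add: smul_diff_right smul_mult[symmetric] algebra_simps)
qed

lemma quartic_delta_smul:
  "quartic_delta smul k (\<lambda>z. smul r (g z)) x y = smul r (quartic_delta smul k g x y)"
  unfolding quartic_delta_def by (simp add: smul_add_right smul_diff_right smul_commute[of r])

lemma quartic_delta_gmul:
  "quartic_delta smul k (\<lambda>z. g (gmul m z)) x y = quartic_delta smul k g (gmul m x) (gmul m y)"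
  unfolding quartic_delta_def by (simp add: gmul_add_right gmul_diff_right gmul_commute[of m k])

(* Q 0 = 0 need not hold (k = 1); only the multiple of Q 0 occurring in Delta Q (x,0) vanishes. *)
lemma quartic_map_homogeneous:
  assumes Q: "quartic_map smul k Q" and k: "(of_nat k :: 'k) \<noteq> 0" and two: "(2::'k) \<noteq> 0"
  shows "Q (gmul k x) = smul (of_nat k ^ 4) (Q x)"
proof -
  define c :: 'k where "c = of_nat k"
  have "quartic_delta smul k Q 0 0 = smul (2 - 2 * c ^ 4 + 2 * (c ^ 2 - 1)) (Q 0)"
    unfolding quartic_delta_at_0 c_def[symmetric] smul_add_left smul_diff_left
    by (simp add: smul_diff_right smul_mult)
  also have "2 - 2 * c ^ 4 + 2 * (c ^ 2 - 1) = - (c ^ 2) * (2 * (c ^ 2 - 1))"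
    by (simp add: algebra_simps power2_eq_square power4_eq_xxxx)
  finally have "smul (- (c ^ 2)) (smul (2 * (c ^ 2 - 1)) (Q 0)) = quartic_delta smul k Q 0 0"
    by (simp add: smul_mult[symmetric])
  then have "smul (2 * (c ^ 2 - 1)) (Q 0) = 0"
    using Q k by (simp add: quartic_map_def smul_eq_0_iff c_def)
  then have "smul 2 (Q (gmul k x) - smul (c ^ 4) (Q x)) = 0"
    using Q quartic_delta_at_0[of k Q x] by (simp add: quartic_map_def c_def)
  then show ?thesis
    using two by (simp add: smul_eq_0_iff c_def)
qed

lemma quartic_map_homogeneous_power:
  assumes "quartic_map smul k Q" "(of_nat k :: 'k) \<noteq> 0" "(2::'k) \<noteq> 0"
  shows "Q (gmul (k ^ n) x) = smul ((of_nat k ^ 4) ^ n) (Q x)"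
proof (induction n)
  case (Suc n)
  have "Q (gmul (k ^ Suc n) x) = Q (gmul k (gmul (k ^ n) x))"
    by (simp add: gmul_mult)
  also have "\<dots> = smul ((of_nat k ^ 4) ^ Suc n) (Q x)"
    using quartic_map_homogeneous[OF assms] Suc by (simp add: smul_mult)
  finally show ?case .
qed (simp add: gmul_Suc)

end

locale quartic_stability = nonarch_space v smul nrm
  for v :: "'k::field \<Rightarrow> real" and smul :: "'k \<Rightarrow> 'x::ab_group_add \<Rightarrow> 'x" and nrm :: "'x \<Rightarrow> real" +
  fixes k :: nat and psi :: "'g::ab_group_add \<Rightarrow> 'g \<Rightarrow> real" and f :: "'g \<Rightarrow> 'x"
  assumes v_2k4_nonzero: "v (2 * of_nat k ^ 4) \<noteq> 0"
    and psi_nonneg: "\<And>x y. 0 \<le> psi x y"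
    and psi_scaled_tendsto_0:
      "\<And>x y. (\<lambda>n. psi (gmul (k ^ n) x) (gmul (k ^ n) y) / v (of_nat k) ^ (4 * n)) \<longlonglongrightarrow> 0"
    and psi_max_convergent: "\<And>x. convergent (\<lambda>n. psi_max v k psi x 0 n)"
    and f_0: "f 0 = 0"
    and f_approx_quartic: "\<And>x y. nrm (quartic_delta smul k f x y) \<le> psi x y"
begin

lemma of_nat_k_nonzero: "(of_nat k :: 'k) \<noteq> 0"
  using v_2k4_nonzero by (auto simp: v_eq_0_iff)

lemma two_nonzero: "(2::'k) \<noteq> 0"
  using v_2k4_nonzero by (auto simp: v_eq_0_iff)

lemma v_k_pos: "0 < v (of_nat k)"
  using of_nat_k_nonzero by (simp add: v_pos_iff)

lemma v_2_pos: "0 < v 2"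
  using two_nonzero by (simp add: v_pos_iff)

lemma v_2k4_eq: "v (2 * of_nat k ^ 4) = v 2 * v (of_nat k) ^ 4"
  by (simp add: v_mult v_power)

lemma v_2k4_pos: "0 < v (2 * of_nat k ^ 4)"
  using v_2k4_nonzero v_nonneg[of "2 * of_nat k ^ 4"] by linarith

lemma v_inverse_k4_power: "v (inverse (of_nat k ^ 4 :: 'k) ^ n) = 1 / v (of_nat k) ^ (4 * n)"
  by (simp add: v_power v_inverse power_mult power_inverse divide_inverse)

definition hyers_seq :: "nat \<Rightarrow> 'g \<Rightarrow> 'x" where
  "hyers_seq n x = smul (inverse (of_nat k ^ 4) ^ n) (f (gmul (k ^ n) x))"

lemma hyers_seq_0 [simp]: "hyers_seq 0 x = f x"
  by (simp add: hyers_seq_def)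

lemma v_2_nrm_defect_le: "v 2 * nrm (f (gmul k x) - smul (of_nat k ^ 4) (f x)) \<le> psi x 0"
  using f_approx_quartic[of x 0] by (simp add: quartic_delta_at_0 f_0 nrm_smul)

lemma hyers_seq_Suc_diff:
  "hyers_seq (Suc n) x - hyers_seq n x = smul (inverse (of_nat k ^ 4) ^ Suc n)
     (f (gmul k (gmul (k ^ n) x)) - smul (of_nat k ^ 4) (f (gmul (k ^ n) x)))"
proof -
  have cancel: "inverse (of_nat k ^ 4 :: 'k) ^ Suc n * of_nat k ^ 4 = inverse (of_nat k ^ 4) ^ n"
    using of_nat_k_nonzero by (simp add: mult.assoc)
  show ?thesis
    unfolding hyers_seq_def smul_diff_right smul_mult[symmetric] cancel by (simp add: gmul_mult)
qed

lemma nrm_hyers_seq_Suc_diff_le: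
  "nrm (hyers_seq (Suc n) x - hyers_seq n x) \<le>
     psi (gmul (k ^ n) x) 0 / v (of_nat k) ^ (4 * n) / v (2 * of_nat k ^ 4)"
proof -
  have "nrm (hyers_seq (Suc n) x - hyers_seq n x) = 1 / v (of_nat k) ^ (4 * Suc n) *
      nrm (f (gmul k (gmul (k ^ n) x)) - smul (of_nat k ^ 4) (f (gmul (k ^ n) x)))"
    unfolding hyers_seq_Suc_diff nrm_smul v_inverse_k4_power ..
  also have "\<dots> \<le> 1 / v (of_nat k) ^ (4 * Suc n) * (psi (gmul (k ^ n) x) 0 / v 2)"
    using v_2_nrm_defect_le[of "gmul (k ^ n) x"] v_2_pos v_k_pos
    by (intro mult_left_mono) (simp_all add: field_simps)
  also have "\<dots> = psi (gmul (k ^ n) x) 0 / v (of_nat k) ^ (4 * n) / v (2 * of_nat k ^ 4)"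
    unfolding v_2k4_eq using v_k_pos v_2_pos by (simp add: field_simps power_add)
  finally show ?thesis .
qed

lemma hyers_seq_converges: "\<exists>l. converges_to (\<lambda>n. hyers_seq n x) l"
proof (rule converges_if_steps_tendsto_0,
    rule tendsto_0_dominated[OF nrm_nonneg nrm_hyers_seq_Suc_diff_le])
  have "(\<lambda>n. psi (gmul (k ^ n) x) 0 / v (of_nat k) ^ (4 * n)) \<longlonglongrightarrow> 0"
    using psi_scaled_tendsto_0[of x 0] by simp
  then show "(\<lambda>n. psi (gmul (k ^ n) x) 0 / v (of_nat k) ^ (4 * n) / v (2 * of_nat k ^ 4)) \<longlonglongrightarrow> 0"
    by (rule tendsto_divide_zero)
qed

definition Q :: "'g \<Rightarrow> 'x" where
  "Q x = (SOME l. converges_to (\<lambda>n. hyers_seq n x) l)"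

lemma converges_to_Q: "converges_to (\<lambda>n. hyers_seq n x) (Q x)"
  unfolding Q_def using hyers_seq_converges by (rule someI_ex)

lemma psi_scaled_le_psi_max:
  "j < n \<Longrightarrow> psi (gmul (k ^ j) x) 0 / v (of_nat k) ^ (4 * j) \<le> psi_max v k psi x 0 n"
  unfolding psi_max_def by (intro Max_ge) auto

(* psi_max v k psi x 0 0 is Max {}, an unspecified value; hence the restriction to n \<ge> 1. *)
lemma psi_max_nonneg: "1 \<le> n \<Longrightarrow> 0 \<le> psi_max v k psi x 0 n"
  using psi_scaled_le_psi_max[of 0 n x] psi_nonneg[of x 0] by simp

lemma nrm_hyers_seq_minus_f_le:
  assumes "1 \<le> n"
  shows "nrm (hyers_seq n x - f x) \<le> psi_max v k psi x 0 n / v (2 * of_nat k ^ 4)"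
proof -
  have "nrm (hyers_seq n x - hyers_seq 0 x) \<le> psi_max v k psi x 0 n / v (2 * of_nat k ^ 4)"
  proof (rule ultrametric_telescope)
    show "0 \<le> psi_max v k psi x 0 n / v (2 * of_nat k ^ 4)"
      using psi_max_nonneg[OF assms] v_2k4_pos by simp
    fix j
    assume "j < n"
    then show "nrm (hyers_seq (Suc j) x - hyers_seq j x) \<le> psi_max v k psi x 0 n / v (2 * of_nat k ^ 4)"
      by (rule order_trans[OF nrm_hyers_seq_Suc_diff_le divide_right_mono[OF psi_scaled_le_psi_max]])
        (use v_2k4_pos in simp_all)
  qed simp
  then show ?thesis
    by simp
qed

lemma nrm_Q_minus_f_le: "nrm (Q x - f x) \<le> psi_tilde v k psi x / v (2 * of_nat k ^ 4)"
proof (rule nrm_limit_le[OF converges_to_Q])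
  show "(\<lambda>n. psi_max v k psi x 0 n / v (2 * of_nat k ^ 4)) \<longlonglongrightarrow>
      psi_tilde v k psi x / v (2 * of_nat k ^ 4)"
    using psi_max_convergent[of x] v_2k4_pos unfolding psi_tilde_def convergent_LIMSEQ_iff
    by (intro tendsto_divide tendsto_const) auto
qed (rule nrm_hyers_seq_minus_f_le)

lemma quartic_delta_hyers_seq:
  "quartic_delta smul k (hyers_seq n) x y =
     smul (inverse (of_nat k ^ 4) ^ n) (quartic_delta smul k f (gmul (k ^ n) x) (gmul (k ^ n) y))"
proof -
  have "hyers_seq n = (\<lambda>z. smul (inverse (of_nat k ^ 4) ^ n) (f (gmul (k ^ n) z)))"
    by (simp add: hyers_seq_def fun_eq_iff)
  then show ?thesis
    by (simp only: quartic_delta_smul quartic_delta_gmul)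
qed

lemma quartic_map_Q: "quartic_map smul k Q"
  unfolding quartic_map_def
proof (intro allI)
  fix x y
  have "converges_to (\<lambda>n. quartic_delta smul k (hyers_seq n) x y) (quartic_delta smul k Q x y)"
    unfolding quartic_delta_def
    by (intro converges_to_add converges_to_diff converges_to_smul converges_to_Q)
  then have "nrm (quartic_delta smul k Q x y - 0) \<le> 0"
  proof (rule nrm_limit_le)
    show "(\<lambda>n. psi (gmul (k ^ n) x) (gmul (k ^ n) y) / v (of_nat k) ^ (4 * n)) \<longlonglongrightarrow> 0"
      by (rule psi_scaled_tendsto_0)
    fix n
    show "nrm (quartic_delta smul k (hyers_seq n) x y - 0) \<le>
        psi (gmul (k ^ n) x) (gmul (k ^ n) y) / v (of_nat k) ^ (4 * n)"
      unfolding quartic_delta_hyers_seq diff_zero nrm_smul v_inverse_k4_power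
      using f_approx_quartic[of "gmul (k ^ n) x" "gmul (k ^ n) y"] v_k_pos
      by (auto intro: divide_right_mono)
  qed
  then show "quartic_delta smul k Q x y = 0"
    by (simp add: nrm_le_0_iff)
qed

lemma psi_max_shift:
  assumes "1 \<le> m"
  shows "psi_max v k psi (gmul (k ^ n) x) 0 m / v (of_nat k) ^ (4 * n) = psi_max v k psi x n m"
proof -
  define C where "C = v (of_nat k) ^ (4 * n)"
  define h where "h j = psi (gmul (k ^ j) x) 0 / v (of_nat k) ^ (4 * j)" for j
  have "mono (\<lambda>t::real. t / C)"
    using v_k_pos by (auto simp: C_def mono_def divide_right_mono)
  then have "psi_max v k psi (gmul (k ^ n) x) 0 m / C =
      Max ((\<lambda>j. psi (gmul (k ^ j) (gmul (k ^ n) x)) 0 / v (of_nat k) ^ (4 * j) / C) ` {0..<m})"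
    unfolding psi_max_def using assms by (subst mono_Max_commute) (auto simp: image_image)
  also have "\<dots> = Max (h ` (\<lambda>j. j + n) ` {0..<m})"
    unfolding image_image h_def C_def
    by (simp add: gmul_mult[symmetric] power_add distrib_left mult.commute)
  also have "\<dots> = psi_max v k psi x n m"
    by (simp add: psi_max_def h_def)
  finally show ?thesis
    unfolding C_def .
qed

lemma lim_psi_max_shift:
  "lim (\<lambda>m. psi_max v k psi x n m) = psi_tilde v k psi (gmul (k ^ n) x) / v (of_nat k) ^ (4 * n)"
proof (rule limI)
  have "(\<lambda>m. psi_max v k psi (gmul (k ^ n) x) 0 m / v (of_nat k) ^ (4 * n)) \<longlonglongrightarrow>
      psi_tilde v k psi (gmul (k ^ n) x) / v (of_nat k) ^ (4 * n)"
    using psi_max_convergent[of "gmul (k ^ n) x"] v_k_pos unfolding psi_tilde_def convergent_LIMSEQ_iff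
    by (intro tendsto_divide tendsto_const) auto
  then show "(\<lambda>m. psi_max v k psi x n m) \<longlonglongrightarrow> psi_tilde v k psi (gmul (k ^ n) x) / v (of_nat k) ^ (4 * n)"
    by (rule Lim_transform_eventually)
      (auto simp: eventually_at_top_linorder psi_max_shift intro!: exI[of _ 1])
qed

lemma quartic_map_unique:
  assumes tail: "\<And>x. (\<lambda>i. lim (\<lambda>n. psi_max v k psi x i n)) \<longlonglongrightarrow> 0"
    and Q': "quartic_map smul k Q'"
    and Q'_f: "\<And>x. nrm (Q' x - f x) \<le> psi_tilde v k psi x / v (2 * of_nat k ^ 4)"
  shows "Q' = Q"
proof
  fix x :: 'g
  have scaled: "R x = smul (inverse (of_nat k ^ 4) ^ n) (R (gmul (k ^ n) x))"
    if "quartic_map smul k R" for R n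
    using quartic_map_homogeneous_power[OF that of_nat_k_nonzero two_nonzero]
      smul_inverse_cancel[of "(of_nat k ^ 4) ^ n"] of_nat_k_nonzero
    by (simp add: power_inverse)
  have "nrm (Q' x - Q x) \<le> lim (\<lambda>m. psi_max v k psi x n m) / v (2 * of_nat k ^ 4)" for n
  proof -
    define z where "z = gmul (k ^ n) x"
    have "nrm (Q' z - Q z) \<le> max (nrm (Q' z - f z)) (nrm (f z - Q z))"
      by (rule nrm_diff_ultrametric)
    then have bound_z: "nrm (Q' z - Q z) \<le> psi_tilde v k psi z / v (2 * of_nat k ^ 4)"
      using Q'_f[of z] nrm_Q_minus_f_le[of z] nrm_commute[of "f z" "Q z"] by simp
    have "nrm (Q' x - Q x) = nrm (Q' z - Q z) / v (of_nat k) ^ (4 * n)"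
      using scaled[OF Q', of n] scaled[OF quartic_map_Q, of n]
      by (simp add: z_def smul_diff_right[symmetric] nrm_smul v_inverse_k4_power)
    also have "\<dots> \<le> psi_tilde v k psi z / v (2 * of_nat k ^ 4) / v (of_nat k) ^ (4 * n)"
      by (rule divide_right_mono[OF bound_z]) (use v_k_pos in simp)
    also have "\<dots> = lim (\<lambda>m. psi_max v k psi x n m) / v (2 * of_nat k ^ 4)"
      by (simp add: lim_psi_max_shift z_def mult.commute)
    finally show ?thesis .
  qed
  moreover have "(\<lambda>n. lim (\<lambda>m. psi_max v k psi x n m) / v (2 * of_nat k ^ 4)) \<longlonglongrightarrow> 0"
    using tail by (simp add: tendsto_divide_zero)
  ultimately have "nrm (Q' x - Q x) \<le> 0"
    by (intro LIMSEQ_le_const) auto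
  then show "Q' x = Q x"
    by (simp add: nrm_le_0_iff)
qed

end

theorem theorem3p1:
  fixes v :: "'k::field \<Rightarrow> real"
    and smul :: "'k \<Rightarrow> 'x::ab_group_add \<Rightarrow> 'x"
    and nrm :: "'x \<Rightarrow> real"
    and k :: nat
    and psi :: "'g::ab_group_add \<Rightarrow> 'g \<Rightarrow> real"
    and f :: "'g \<Rightarrow> 'x"
  assumes "nonarch_valuation v"
    and "nontrivial_valuation v"
    and "complete_nonarch_normed_space v smul nrm"
    and "v (2 * (of_nat k) ^ 4) \<noteq> 0"
    and "\<forall>x y. psi x y \<ge> 0"
    and "\<forall>x y. (\<lambda>n. psi (gmul (k ^ n) x) (gmul (k ^ n) y) / (v (of_nat k)) ^ (4 * n)) \<longlonglongrightarrow> 0"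
    and "\<forall>x. convergent (\<lambda>n. psi_max v k psi x 0 n)"
    and "f 0 = 0"
    and "\<forall>x y. nrm (quartic_delta smul k f x y) \<le> psi x y"
  shows "\<exists>Q. quartic_map smul k Q
           \<and> (\<forall>x. nrm (Q x - f x) \<le> psi_tilde v k psi x / v (2 * (of_nat k) ^ 4))
           \<and> ((\<forall>x. (\<lambda>i. lim (\<lambda>n. psi_max v k psi x i n)) \<longlonglongrightarrow> 0) \<longrightarrow>
                (\<forall>Q'. quartic_map smul k Q'
                   \<and> (\<forall>x. nrm (Q' x - f x) \<le> psi_tilde v k psi x / v (2 * (of_nat k) ^ 4))
                   \<longrightarrow> Q' = Q))"
proof -
  interpret quartic_stability v smul nrm k psi f
    using assms by unfold_locales (simp_all add: nonarch_space_def)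
  show ?thesis
    using quartic_map_Q nrm_Q_minus_f_le quartic_map_unique by blast
qed

end
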